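(* Let $\Omega\subseteq\mathbb{R}^3$ be open and connected, and let $R\in C^2(\Omega;SO(3))$ be such that $\operatorname{curl}R=\alpha$ for some constant $\alpha\in\mathbb{R}^{3\times3}$. Then $R$ is constant.
   Context: $SO(3)$ is the group of $3\times3$ rotation matrices. For a matrix field $R$, $\operatorname{curl}$ is applied row-wise: $(\operatorname{curl}R)_{ij}=\varepsilon_{jkl}\partial_kR_{il}$ (Einstein summation, $\varepsilon_{jkl}$ the sign of the permutation $(jkl)$). *)

theory Defs
  imports "HOL-Analysis.Analysis"
begin

definition levi_civita :: "3 \<Rightarrow> 3 \<Rightarrow> 3 \<Rightarrow> real" where
  "levi_civita j k l =
     (if card {j, k, l} = 3
      then real_of_int (sign (\<lambda>r::3. if r = 1 then j else if r = 2 then k else l))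
      else 0)"

definition partial_deriv :: "3 \<Rightarrow> (real^3 \<Rightarrow> 'b::real_normed_vector) \<Rightarrow> real^3 \<Rightarrow> 'b" where
  "partial_deriv k f x = frechet_derivative f (at x) (axis k 1)"

definition curl_mat :: "(real^3 \<Rightarrow> real^3^3) \<Rightarrow> real^3 \<Rightarrow> real^3^3" where
  "curl_mat R x = (\<chi> i j. \<Sum>k\<in>UNIV. \<Sum>l\<in>UNIV.
       levi_civita j k l * (partial_deriv k R x) $ i $ l)"

definition C2_on :: "(real^3) set \<Rightarrow> (real^3 \<Rightarrow> 'b::real_normed_vector) \<Rightarrow> bool" where
  "C2_on S f \<longleftrightarrow> (\<exists>f' :: real^3 \<Rightarrow> ((real^3) \<Rightarrow>\<^sub>L 'b).
      \<exists>f'' :: real^3 \<Rightarrow> ((real^3) \<Rightarrow>\<^sub>L ((real^3) \<Rightarrow>\<^sub>L 'b)).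
      (\<forall>x\<in>S. (f has_derivative blinfun_apply (f' x)) (at x)) \<and>
      (\<forall>x\<in>S. (f' has_derivative blinfun_apply (f'' x)) (at x)) \<and>
      continuous_on S f'')"

end

theory Submission
  imports Defs
begin

text \<open>
  Differentiating \<open>R\<^sup>T R = I\<close> shows that \<open>W\<^sub>k = R\<^sup>T \<partial>\<^sub>k R\<close> is skew, and differentiating
  once more gives \<open>W\<^sub>j\<^sup>T W\<^sub>k + W\<^sub>k\<^sup>T W\<^sub>j + H\<^sub>j\<^sub>k + H\<^sub>j\<^sub>k\<^sup>T = 0\<close> with \<open>H\<^sub>j\<^sub>k = R\<^sup>T \<partial>\<^sub>j \<partial>\<^sub>k R\<close>.
  Constant curl makes \<open>\<partial>\<^sub>j \<partial>\<^sub>k R\<^sub>i\<^sub>l\<close> symmetric in \<open>k, l\<close>, so together with the symmetry of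
  second derivatives the entries \<open>(H\<^sub>j\<^sub>k)\<^sub>p\<^sub>l\<close> are totally symmetric in \<open>j, k, l\<close>.
  Comparing two traces of the second-order identity then eliminates \<open>H\<close> and leaves a quadratic
  identity for the skew matrices \<open>W\<^sub>k\<close> which, in terms of their axial vectors, forces them
  to vanish. Hence \<open>\<partial>R = 0\<close>, and \<open>R\<close> is constant on the connected set \<open>\<Omega>\<close>.
\<close>

section \<open>Symmetry of second derivatives\<close>

lemma has_real_derivative_along_line:
  fixes g :: "'a::real_normed_vector \<Rightarrow> real"
  assumes "(g has_derivative G) (at (x + s *\<^sub>R u))"
  shows "((\<lambda>s. g (x + s *\<^sub>R u)) has_real_derivative G u) (at s)"
proof -
  have "((\<lambda>s. g (x + s *\<^sub>R u)) has_derivative (\<lambda>h. G (h *\<^sub>R u))) (at s)"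
    by (rule has_derivative_compose[where f = "\<lambda>s. x + s *\<^sub>R u", OF _ assms, unfolded o_def])
      (auto intro!: derivative_eq_intros)
  moreover have "G (h *\<^sub>R u) = G u * h" for h
    using linear_scale[OF has_derivative_linear[OF assms]] by simp
  ultimately show ?thesis
    by (simp add: has_field_derivative_def)
qed

lemma second_difference_mean_value:
  fixes g :: "'a::real_normed_vector \<Rightarrow> real"
  assumes S: "ball x r \<subseteq> S" and dg: "\<And>y. y \<in> S \<Longrightarrow> (g has_derivative G y) (at y)"
    and t: "0 < t" "t * (norm u + norm v) < r"
  obtains \<xi> where "0 < \<xi>" "\<xi> < t"
    "g (x + t *\<^sub>R u + t *\<^sub>R v) - g (x + t *\<^sub>R u) - g (x + t *\<^sub>R v) + g x
       = t * (G (x + t *\<^sub>R v + \<xi> *\<^sub>R u) u - G (x + \<xi> *\<^sub>R u) u)"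
proof -
  have in_S: "x + s *\<^sub>R u + s' *\<^sub>R v \<in> S" if "0 \<le> s" "s \<le> t" "0 \<le> s'" "s' \<le> t" for s s'
  proof -
    have "norm (s *\<^sub>R u + s' *\<^sub>R v) \<le> s * norm u + s' * norm v"
      using norm_triangle_ineq[of "s *\<^sub>R u" "s' *\<^sub>R v"] that by simp
    also have "\<dots> \<le> t * (norm u + norm v)"
      using that by (simp add: distrib_left add_mono mult_right_mono)
    finally have "x + (s *\<^sub>R u + s' *\<^sub>R v) \<in> ball x r"
      using t unfolding mem_ball dist_norm norm_minus_commute[of x] add_diff_cancel_left' by linarith
    with S show ?thesis
      by (auto simp: add.assoc)
  qed
  define \<phi> where "\<phi> s = g (x + t *\<^sub>R v + s *\<^sub>R u) - g (x + s *\<^sub>R u)" for s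
  have "(\<phi> has_real_derivative G (x + t *\<^sub>R v + s *\<^sub>R u) u - G (x + s *\<^sub>R u) u) (at s)"
    if "0 \<le> s" "s \<le> t" for s
    unfolding \<phi>_def
    using in_S[of s t] in_S[of s 0] that t
    by (intro DERIV_diff has_real_derivative_along_line dg) (auto simp: algebra_simps)
  then obtain \<xi> where "0 < \<xi>" "\<xi> < t"
      "\<phi> t - \<phi> 0 = (t - 0) * (G (x + t *\<^sub>R v + \<xi> *\<^sub>R u) u - G (x + \<xi> *\<^sub>R u) u)"
    using MVT2[of 0 t \<phi> "\<lambda>s. G (x + t *\<^sub>R v + s *\<^sub>R u) u - G (x + s *\<^sub>R u) u"] t by blast
  then show ?thesis
    by (intro that) (auto simp: \<phi>_def algebra_simps)
qed

lemma second_difference_estimate: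
  fixes g :: "'a::real_normed_vector \<Rightarrow> real"
  assumes ball: "ball x r \<subseteq> S" and dg: "\<And>y. y \<in> S \<Longrightarrow> (g has_derivative G y) (at y)"
    and "linear Hu" and "0 \<le> \<epsilon>"
    and d: "\<And>y. norm (y - x) < d \<Longrightarrow> \<bar>G y u - G x u - Hu (y - x)\<bar> \<le> \<epsilon> * norm (y - x)"
    and "0 < t" and t: "t * (2 * norm u + norm v) < min r d"
  shows "\<bar>g (x + t *\<^sub>R u + t *\<^sub>R v) - g (x + t *\<^sub>R u) - g (x + t *\<^sub>R v) + g x - t\<^sup>2 * Hu v\<bar>
    \<le> \<epsilon> * t\<^sup>2 * (2 * norm u + norm v)"
proof -
  have t_expand: "t * (2 * norm u + norm v) = 2 * (t * norm u) + t * norm v"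
    by (simp add: algebra_simps)
  have "0 \<le> t * norm u"
    using \<open>0 < t\<close> by simp
  then have "t * (norm u + norm v) < r"
    using t t_expand by (simp add: distrib_left)
  then obtain \<xi> where "0 < \<xi>" "\<xi> < t" and mvt:
    "g (x + t *\<^sub>R u + t *\<^sub>R v) - g (x + t *\<^sub>R u) - g (x + t *\<^sub>R v) + g x
       = t * (G (x + t *\<^sub>R v + \<xi> *\<^sub>R u) u - G (x + \<xi> *\<^sub>R u) u)"
    using second_difference_mean_value[OF ball dg \<open>0 < t\<close>] by blast
  define p where "p = t *\<^sub>R v + \<xi> *\<^sub>R u"
  define q where "q = \<xi> *\<^sub>R u"
  have "norm q \<le> t * norm u"
    using \<open>0 < \<xi>\<close> \<open>\<xi> < t\<close> by (simp add: q_def mult_right_mono)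
  moreover have "norm p \<le> t * norm v + norm q"
    using norm_triangle_ineq[of "t *\<^sub>R v" "\<xi> *\<^sub>R u"] \<open>0 < t\<close> by (simp add: p_def q_def)
  ultimately have pq: "norm p + norm q \<le> t * (2 * norm u + norm v)"
    using t_expand by linarith
  have "t * (2 * norm u + norm v) < d"
    using t by simp
  then have pd: "norm p < d" and qd: "norm q < d"
    using pq norm_ge_zero[of p] norm_ge_zero[of q] by linarith+
  have "Hu p - Hu q = t * Hu v"
    using \<open>linear Hu\<close> by (simp add: p_def q_def linear_add linear_scale)
  then have "\<bar>G (x + p) u - G (x + q) u - t * Hu v\<bar>
      \<le> \<bar>G (x + p) u - G x u - Hu p\<bar> + \<bar>G (x + q) u - G x u - Hu q\<bar>"
    by linarith
  also have "\<dots> \<le> \<epsilon> * (norm p + norm q)"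
    using d[of "x + p"] d[of "x + q"] pd qd by (simp add: distrib_left)
  also have "\<dots> \<le> \<epsilon> * (t * (2 * norm u + norm v))"
    using pq \<open>0 \<le> \<epsilon>\<close> by (intro mult_left_mono)
  finally have "t * \<bar>G (x + p) u - G (x + q) u - t * Hu v\<bar> \<le> t * (\<epsilon> * (t * (2 * norm u + norm v)))"
    using \<open>0 < t\<close> by (intro mult_left_mono) auto
  moreover have "g (x + t *\<^sub>R u + t *\<^sub>R v) - g (x + t *\<^sub>R u) - g (x + t *\<^sub>R v) + g x - t\<^sup>2 * Hu v
      = t * (G (x + p) u - G (x + q) u - t * Hu v)"
    unfolding mvt by (simp add: p_def q_def power2_eq_square algebra_simps)
  ultimately show ?thesis
    using \<open>0 < t\<close> by (simp add: abs_mult power2_eq_square mult_ac)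
qed

lemma second_difference_approx:
  fixes g :: "'a::real_normed_vector \<Rightarrow> real"
  assumes "open S" "x \<in> S" and dg: "\<And>y. y \<in> S \<Longrightarrow> (g has_derivative G y) (at y)"
    and du: "((\<lambda>y. G y u) has_derivative Hu) (at x)" and "e > 0"
  shows "\<forall>\<^sub>F t in at_right 0.
    \<bar>g (x + t *\<^sub>R u + t *\<^sub>R v) - g (x + t *\<^sub>R u) - g (x + t *\<^sub>R v) + g x - t\<^sup>2 * Hu v\<bar> \<le> e * t\<^sup>2"
proof -
  obtain r where "r > 0" and ball: "ball x r \<subseteq> S"
    using assms(1,2) openE by blast
  define c where "c = 2 * norm u + norm v + 1"
  have "c > 0"
    using norm_ge_zero[of u] norm_ge_zero[of v] unfolding c_def by linarith
  then have "e / c > 0"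
    using \<open>e > 0\<close> by simp
  with du obtain d where "d > 0" and d:
    "\<And>y. norm (y - x) < d \<Longrightarrow> \<bar>G y u - G x u - Hu (y - x)\<bar> \<le> e / c * norm (y - x)"
    unfolding has_derivative_at_alt real_norm_def by blast
  have "\<forall>\<^sub>F t in at_right 0. 0 < t \<and> t * c < min r d"
    unfolding eventually_at_right_field
    using \<open>c > 0\<close> \<open>r > 0\<close> \<open>d > 0\<close>
    by (intro exI[of _ "min r d / c"]) (auto simp: field_simps)
  then show ?thesis
  proof (rule eventually_mono, elim conjE)
    fix t :: real
    assume "0 < t" "t * c < min r d"
    have "t * (2 * norm u + norm v) \<le> t * c"
      using \<open>0 < t\<close> by (simp add: c_def)
    then have "t * (2 * norm u + norm v) < min r d"
      using \<open>t * c < min r d\<close> by (rule le_less_trans)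
    then have "\<bar>g (x + t *\<^sub>R u + t *\<^sub>R v) - g (x + t *\<^sub>R u) - g (x + t *\<^sub>R v) + g x - t\<^sup>2 * Hu v\<bar>
        \<le> e / c * t\<^sup>2 * (2 * norm u + norm v)"
      using \<open>0 < t\<close> \<open>e / c > 0\<close>
      by (intro second_difference_estimate[OF ball dg has_derivative_linear[OF du] _ d]) auto
    also have "\<dots> \<le> e / c * t\<^sup>2 * c"
      using \<open>e / c > 0\<close> by (intro mult_left_mono mult_nonneg_nonneg) (simp_all add: c_def)
    also have "\<dots> = e * t\<^sup>2"
      using \<open>c > 0\<close> by simp
    finally show "\<bar>g (x + t *\<^sub>R u + t *\<^sub>R v) - g (x + t *\<^sub>R u) - g (x + t *\<^sub>R v) + g x - t\<^sup>2 * Hu v\<bar>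
        \<le> e * t\<^sup>2" .
  qed
qed

lemma second_derivative_symmetric_real:
  fixes g :: "'a::real_normed_vector \<Rightarrow> real"
  assumes "open S" "x \<in> S" and dg: "\<And>y. y \<in> S \<Longrightarrow> (g has_derivative G y) (at y)"
    and du: "((\<lambda>y. G y u) has_derivative Hu) (at x)"
    and dv: "((\<lambda>y. G y v) has_derivative Hv) (at x)"
  shows "Hu v = Hv u"
proof -
  have "\<bar>Hu v - Hv u\<bar> \<le> 0 + e" if "e > 0" for e
  proof -
    define \<Delta> where "\<Delta> t = g (x + t *\<^sub>R u + t *\<^sub>R v) - g (x + t *\<^sub>R u) - g (x + t *\<^sub>R v) + g x"
      for t
    have "e / 2 > 0"
      using \<open>e > 0\<close> by simp
    have "\<forall>\<^sub>F t in at_right 0. \<bar>\<Delta> t - t\<^sup>2 * Hu v\<bar> \<le> e / 2 * t\<^sup>2"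
      unfolding \<Delta>_def by (rule second_difference_approx[OF assms(1,2) dg du \<open>e / 2 > 0\<close>])
    moreover have "g (x + t *\<^sub>R v + t *\<^sub>R u) - g (x + t *\<^sub>R v) - g (x + t *\<^sub>R u) + g x = \<Delta> t"
      for t
      by (simp add: \<Delta>_def add.assoc add.commute[of "t *\<^sub>R v"])
    then have "\<forall>\<^sub>F t in at_right 0. \<bar>\<Delta> t - t\<^sup>2 * Hv u\<bar> \<le> e / 2 * t\<^sup>2"
      using second_difference_approx[OF assms(1,2) dg dv \<open>e / 2 > 0\<close>, of u] by simp
    moreover have "\<forall>\<^sub>F t in at_right 0. 0 < (t::real)"
      by (rule eventually_at_right_less)
    ultimately have "\<forall>\<^sub>F t in at_right 0. 0 < t \<and> \<bar>\<Delta> t - t\<^sup>2 * Hu v\<bar> \<le> e / 2 * t\<^sup>2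
        \<and> \<bar>\<Delta> t - t\<^sup>2 * Hv u\<bar> \<le> e / 2 * t\<^sup>2"
      by eventually_elim blast
    then obtain t where "0 < t" and t: "\<bar>\<Delta> t - t\<^sup>2 * Hu v\<bar> \<le> e / 2 * t\<^sup>2"
        "\<bar>\<Delta> t - t\<^sup>2 * Hv u\<bar> \<le> e / 2 * t\<^sup>2"
      using eventually_happens'[OF trivial_limit_at_right_real] by blast
    have "\<bar>t\<^sup>2 * Hu v - t\<^sup>2 * Hv u\<bar> \<le> t\<^sup>2 * e"
      using t field_sum_of_halves[of "t\<^sup>2 * e"] unfolding abs_le_iff by (simp add: mult_ac)
    moreover have "\<bar>t\<^sup>2 * Hu v - t\<^sup>2 * Hv u\<bar> = t\<^sup>2 * \<bar>Hu v - Hv u\<bar>"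
      by (simp add: right_diff_distrib[symmetric] abs_mult)
    ultimately have "t\<^sup>2 * \<bar>Hu v - Hv u\<bar> \<le> t\<^sup>2 * e"
      by simp
    then show ?thesis
      using \<open>0 < t\<close> by simp
  qed
  then have "\<bar>Hu v - Hv u\<bar> \<le> 0"
    by (rule field_le_epsilon)
  then show ?thesis
    by simp
qed

lemma second_derivative_symmetric:
  fixes g :: "'a::real_normed_vector \<Rightarrow> 'b::euclidean_space"
  assumes "open S" "x \<in> S" and dg: "\<And>y. y \<in> S \<Longrightarrow> (g has_derivative G y) (at y)"
    and du: "((\<lambda>y. G y u) has_derivative Hu) (at x)"
    and dv: "((\<lambda>y. G y v) has_derivative Hv) (at x)"
  shows "Hu v = Hv u"
proof (rule euclidean_eqI)
  fix b :: 'b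
  show "Hu v \<bullet> b = Hv u \<bullet> b"
    by (rule second_derivative_symmetric_real[OF assms(1,2),
          where g = "\<lambda>y. g y \<bullet> b" and G = "\<lambda>y h. G y h \<bullet> b"])
      (auto intro!: derivative_eq_intros dg du dv)
qed

section \<open>Derivatives of orthogonal matrix fields\<close>

lemma bounded_bilinear_matrix_matrix_mult [bounded_bilinear]:
  "bounded_bilinear ((**) :: real^'n^'m \<Rightarrow> real^'p^'n \<Rightarrow> real^'p^'m)"
  unfolding bilinear_conv_bounded_bilinear[symmetric] bilinear_def linear_iff
  by (simp add: matrix_matrix_mult_def vec_eq_iff sum.distrib sum_distrib_left algebra_simps)

lemma bounded_linear_transpose [bounded_linear]:
  "bounded_linear (transpose :: real^'n^'m \<Rightarrow> real^'m^'n)"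
  unfolding linear_conv_bounded_linear[symmetric] linear_iff
  by (simp add: transpose_def vec_eq_iff)

lemma has_derivative_zero_if_constant_on_open:
  assumes "open S" "x \<in> S" "(f has_derivative f') (at x)" "\<And>y. y \<in> S \<Longrightarrow> f y = c"
  shows "f' h = 0"
proof -
  have "(f has_derivative (\<lambda>h. 0)) (at x)"
    by (rule has_derivative_transform_within_open[OF has_derivative_const assms(1,2)])
      (simp add: assms(4))
  then show ?thesis
    using has_derivative_unique[OF assms(3)] by metis
qed

lemma orthogonal_field_derivative_skew:
  fixes R :: "'a::real_normed_vector \<Rightarrow> real^'n^'n"
  assumes "open S" "x \<in> S" "\<And>y. y \<in> S \<Longrightarrow> orthogonal_matrix (R y)"
    and dR: "(R has_derivative R') (at x)"
  shows "transpose (R' h) ** R x + transpose (R x) ** R' h = 0"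
proof -
  have "((\<lambda>y. transpose (R y) ** R y) has_derivative
      (\<lambda>h. transpose (R x) ** R' h + transpose (R' h) ** R x)) (at x)"
    by (auto intro!: derivative_eq_intros dR)
  moreover have "transpose (R y) ** R y = mat 1" if "y \<in> S" for y
    using assms(3)[OF that] by (simp add: orthogonal_matrix_def)
  ultimately have "transpose (R x) ** R' h + transpose (R' h) ** R x = 0"
    by (rule has_derivative_zero_if_constant_on_open[OF assms(1,2)])
  then show ?thesis
    by (simp add: add.commute)
qed

lemma orthogonal_field_second_derivative:
  fixes R :: "'a::real_normed_vector \<Rightarrow> real^'n^'n"
  assumes "open S" "x \<in> S" "\<And>y. y \<in> S \<Longrightarrow> orthogonal_matrix (R y)"
    and dR: "\<And>y. y \<in> S \<Longrightarrow> (R has_derivative R' y) (at y)"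
    and dR': "((\<lambda>y. R' y v) has_derivative R'') (at x)"
  shows "transpose (R' x u) ** R' x v + transpose (R' x v) ** R' x u
    + transpose (R x) ** R'' u + transpose (R'' u) ** R x = 0"
proof -
  have "((\<lambda>y. transpose (R' y v) ** R y + transpose (R y) ** R' y v) has_derivative
      (\<lambda>u. transpose (R' x v) ** R' x u + transpose (R'' u) ** R x
        + (transpose (R x) ** R'' u + transpose (R' x u) ** R' x v))) (at x)"
    by (auto intro!: derivative_eq_intros dR dR' assms(2))
  moreover have "transpose (R' y v) ** R y + transpose (R y) ** R' y v = 0" if "y \<in> S" for y
    by (rule orthogonal_field_derivative_skew[OF assms(1) that assms(3) dR[OF that]])
  ultimately have "transpose (R' x v) ** R' x u + transpose (R'' u) ** R x
        + (transpose (R x) ** R'' u + transpose (R' x u) ** R' x v) = 0"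
    by (rule has_derivative_zero_if_constant_on_open[OF assms(1,2)])
  then show ?thesis
    by (simp add: add_ac)
qed

section \<open>The Levi-Civita symbol\<close>

lemma levi_civita_repeated: "j = k \<or> j = l \<or> k = l \<Longrightarrow> levi_civita j k l = 0"
proof -
  assume "j = k \<or> j = l \<or> k = l"
  then have "card {j, k, l} \<le> 2"
    by (auto simp: card_insert_if)
  then show ?thesis
    by (simp add: levi_civita_def)
qed

lemma levi_civita_nonzero: "j \<noteq> k \<Longrightarrow> j \<noteq> l \<Longrightarrow> k \<noteq> l \<Longrightarrow> levi_civita j k l \<noteq> 0"
  by (simp add: levi_civita_def card_insert_if sign_def)

lemma levi_civita_swap: "levi_civita j l k = - levi_civita j k l"
proof (cases "j = k \<or> j = l \<or> k = l")
  case True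
  then show ?thesis
    using levi_civita_repeated[of j k l] levi_civita_repeated[of j l k] by auto
next
  case False
  define p where "p = (\<lambda>r::3. if r = 1 then j else if r = 2 then k else l)"
  have "inj p"
    unfolding inj_def p_def using False exhaust_3 by metis
  then have "permutation p"
    by (simp add: permutation bij_def finite_UNIV_inj_surj)
  moreover have
    "(\<lambda>r::3. if r = 1 then j else if r = 2 then l else k) = p \<circ> Transposition.transpose 2 3"
    by (rule ext) (use exhaust_3 in \<open>auto simp: p_def Transposition.transpose_def\<close>)
  ultimately have "sign (\<lambda>r::3. if r = 1 then j else if r = 2 then l else k) = - sign p"
    by (simp add: sign_compose permutation_swap_id sign_swap_id)
  moreover have "card {j, l, k} = card {j, k, l}"
    by (simp add: insert_commute)
  ultimately show ?thesis
    by (simp add: levi_civita_def p_def)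
qed

lemma symmetric_if_levi_civita_contraction_eq_0:
  fixes X :: "3 \<Rightarrow> 3 \<Rightarrow> real"
  assumes "\<And>j. (\<Sum>k\<in>UNIV. \<Sum>l\<in>UNIV. levi_civita j k l * X k l) = 0"
  shows "X k l = X l k"
proof -
  have "levi_civita 1 2 3 * (X 2 3 - X 3 2) = 0"
    using assms[of 1]
    by (simp add: sum_3 levi_civita_repeated levi_civita_swap[of 1 2 3] algebra_simps)
  moreover have "levi_civita 2 3 1 * (X 3 1 - X 1 3) = 0"
    using assms[of 2]
    by (simp add: sum_3 levi_civita_repeated levi_civita_swap[of 2 3 1] algebra_simps)
  moreover have "levi_civita 3 1 2 * (X 1 2 - X 2 1) = 0"
    using assms[of 3]
    by (simp add: sum_3 levi_civita_repeated levi_civita_swap[of 3 1 2] algebra_simps)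
  ultimately have "X 2 3 = X 3 2" "X 3 1 = X 1 3" "X 1 2 = X 2 1"
    by (simp_all add: levi_civita_nonzero)
  then show ?thesis
    using exhaust_3[of k] exhaust_3[of l] by auto
qed

section \<open>Skew matrices in three dimensions\<close>

lemma skew_matrices_eq_0_if_trace_identity:
  fixes W :: "3 \<Rightarrow> real^3^3"
  assumes skew: "\<And>k. transpose (W k) = - W k"
    and trace: "(\<Sum>j\<in>UNIV. \<Sum>k\<in>UNIV. (transpose (W j) ** W k + transpose (W k) ** W j) $ j $ k)
      = 2 * (\<Sum>j\<in>UNIV. \<Sum>p\<in>UNIV. \<Sum>q\<in>UNIV. (W j $ q $ p)\<^sup>2)"
  shows "W k = 0"
proof -
  have entry_skew: "W k $ a $ b = - W k $ b $ a" for k a b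
    using arg_cong[of _ _ "\<lambda>M. M $ b $ a", OF skew[of k]] by (simp add: transpose_def)
  txt \<open>\<open>\<omega> k\<close> is the axial vector of \<open>W k\<close>; the defect in the trace identity is a sum of
    squares in \<open>\<omega>\<close>.\<close>
  define \<omega> where "\<omega> k q = (if q = 1 then W k $ 3 $ 2 else if q = 2 then W k $ 1 $ 3 else W k $ 2 $ 1)"
    for k q :: 3
  have entries: "W k $ 1 $ 1 = 0" "W k $ 2 $ 2 = 0" "W k $ 3 $ 3 = 0"
    "W k $ 1 $ 2 = - \<omega> k 3" "W k $ 1 $ 3 = \<omega> k 2" "W k $ 2 $ 1 = \<omega> k 3" "W k $ 2 $ 3 = - \<omega> k 1"
    "W k $ 3 $ 1 = - \<omega> k 2" "W k $ 3 $ 2 = \<omega> k 1" for k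
    using entry_skew[of k 1 1] entry_skew[of k 2 2] entry_skew[of k 3 3]
      entry_skew[of k 1 2] entry_skew[of k 2 3] entry_skew[of k 3 1]
    by (simp_all add: \<omega>_def)
  define P where "P = (\<Sum>k\<in>UNIV. \<Sum>q\<in>UNIV. (\<omega> k q)\<^sup>2)
    + (\<Sum>i\<in>UNIV. \<Sum>j\<in>UNIV. (\<omega> i j + \<omega> j i)\<^sup>2) / 2 + (\<Sum>i\<in>UNIV. \<omega> i i)\<^sup>2"
  have "P = 2 * (\<Sum>j\<in>UNIV. \<Sum>p\<in>UNIV. \<Sum>q\<in>UNIV. (W j $ q $ p)\<^sup>2)
      - (\<Sum>j\<in>UNIV. \<Sum>k\<in>UNIV. (transpose (W j) ** W k + transpose (W k) ** W j) $ j $ k)"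
    unfolding P_def matrix_matrix_mult_def transpose_def
    by (simp only: sum_3 entries vector_add_component vec_lambda_beta)
      (simp add: power2_eq_square algebra_simps)
  then have "P = 0"
    using trace by simp
  moreover have "(\<omega> k q)\<^sup>2 \<le> P" for k q
  proof -
    have "(\<omega> k q)\<^sup>2 \<le> (\<Sum>q\<in>UNIV. (\<omega> k q)\<^sup>2)"
      by (rule member_le_sum) auto
    also have "\<dots> \<le> (\<Sum>k\<in>UNIV. \<Sum>q\<in>UNIV. (\<omega> k q)\<^sup>2)"
      by (rule member_le_sum) (auto intro: sum_nonneg)
    also have "\<dots> \<le> P"
      unfolding P_def by (simp add: sum_nonneg)
    finally show ?thesis .
  qed
  ultimately have \<omega>_eq_0: "\<omega> k q = 0" for k q
    using power2_less_eq_zero_iff by metis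
  have "W k $ a $ b = 0" for a b
    using exhaust_3[of a] exhaust_3[of b] entries[of k] by (auto simp: \<omega>_eq_0)
  then show ?thesis
    by (simp add: vec_eq_iff)
qed

lemma skew_connection_eq_0:
  fixes W :: "3 \<Rightarrow> real^3^3" and H :: "3 \<Rightarrow> 3 \<Rightarrow> real^3^3"
  assumes skew: "\<And>k. transpose (W k) = - W k"
    and H_sym: "\<And>j k. H j k = H k j"
    and H_sym': "\<And>j k p l. H j k $ p $ l = H j l $ p $ k"
    and second: "\<And>j k. transpose (W j) ** W k + transpose (W k) ** W j + H j k + transpose (H j k) = 0"
  shows "W k = 0"
proof (rule skew_matrices_eq_0_if_trace_identity[OF skew])
  define M where "M j k = transpose (W j) ** W k + transpose (W k) ** W j" for j k
  have M_entry: "M j k $ a $ b = - H j k $ a $ b - H j k $ b $ a" for j k a b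
    using arg_cong[of _ _ "\<lambda>A. A $ a $ b", OF second[of j k]]
    by (simp add: M_def transpose_def eq_neg_iff_add_eq_0 add.assoc)
  txt \<open>By the symmetries of \<open>H\<close> both traces pick up the same multiple of
    \<open>\<Sum>j p. (H j j)\<^sub>p\<^sub>p\<close>, which therefore cancels.\<close>
  have "M j k $ j $ k = - H k k $ j $ j - H j j $ k $ k" for j k
    using H_sym[of j k] H_sym'[of k j j k] H_sym'[of j k k j] by (simp add: M_entry)
  then have "(\<Sum>j\<in>UNIV. \<Sum>k\<in>UNIV. M j k $ j $ k)
      = - (\<Sum>j\<in>UNIV. \<Sum>k\<in>UNIV. H k k $ j $ j) - (\<Sum>j\<in>UNIV. \<Sum>k\<in>UNIV. H j j $ k $ k)"
    by (simp add: sum_subtractf sum_negf)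
  also have "\<dots> = - 2 * (\<Sum>j\<in>UNIV. \<Sum>p\<in>UNIV. H j j $ p $ p)"
    using sum.swap[of "\<lambda>j k. H k k $ j $ j"] by simp
  also have "\<dots> = (\<Sum>j\<in>UNIV. \<Sum>p\<in>UNIV. M j j $ p $ p)"
    by (simp add: M_entry sum_negf sum_distrib_left)
  also have "\<dots> = 2 * (\<Sum>j\<in>UNIV. \<Sum>p\<in>UNIV. \<Sum>q\<in>UNIV. (W j $ q $ p)\<^sup>2)"
    by (simp add: M_def matrix_matrix_mult_def transpose_def power2_eq_square sum_distrib_left)
  finally show "(\<Sum>j\<in>UNIV. \<Sum>k\<in>UNIV. (transpose (W j) ** W k + transpose (W k) ** W j) $ j $ k)
      = 2 * (\<Sum>j\<in>UNIV. \<Sum>p\<in>UNIV. \<Sum>q\<in>UNIV. (W j $ q $ p)\<^sup>2)"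
    by (simp add: M_def)
qed

section \<open>Orthogonal fields with constant curl\<close>

lemmas has_derivative_vec_nth [derivative_intros] =
  bounded_linear.has_derivative[OF bounded_linear_vec_nth]

lemma curl_const_second_derivative_symmetric:
  fixes R :: "real^3 \<Rightarrow> real^3^3"
  assumes "open S" "x \<in> S" and dR: "\<And>y. y \<in> S \<Longrightarrow> (R has_derivative R' y) (at y)"
    and dR': "\<And>v. ((\<lambda>y. R' y v) has_derivative (\<lambda>h. R'' h v)) (at x)"
    and curl: "\<And>y. y \<in> S \<Longrightarrow> curl_mat R y = \<alpha>"
  shows "R'' h (axis k 1) $ i $ l = R'' h (axis l 1) $ i $ k"
proof (rule symmetric_if_levi_civita_contraction_eq_0)
  fix j
  have "((\<lambda>y. \<Sum>k\<in>UNIV. \<Sum>l\<in>UNIV. levi_civita j k l * R' y (axis k 1) $ i $ l)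
      has_derivative (\<lambda>h. \<Sum>k\<in>UNIV. \<Sum>l\<in>UNIV. levi_civita j k l * R'' h (axis k 1) $ i $ l)) (at x)"
    by (intro derivative_eq_intros) (auto intro: dR')
  moreover have "(\<Sum>k\<in>UNIV. \<Sum>l\<in>UNIV. levi_civita j k l * R' y (axis k 1) $ i $ l) = \<alpha> $ i $ j"
    if "y \<in> S" for y
    using arg_cong[of _ _ "\<lambda>A. A $ i $ j", OF curl[OF that]]
    by (simp add: curl_mat_def partial_deriv_def frechet_derivative_at[OF dR[OF that], symmetric])
  ultimately show "(\<Sum>k\<in>UNIV. \<Sum>l\<in>UNIV. levi_civita j k l * R'' h (axis k 1) $ i $ l) = 0"
    by (rule has_derivative_zero_if_constant_on_open[OF assms(1,2)])
qed

lemma orthogonal_field_const_curl_derivative_eq_0: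
  fixes R :: "real^3 \<Rightarrow> real^3^3"
  assumes "open S" "x \<in> S" and orth: "\<And>y. y \<in> S \<Longrightarrow> orthogonal_matrix (R y)"
    and dR: "\<And>y. y \<in> S \<Longrightarrow> (R has_derivative R' y) (at y)"
    and dR': "\<And>v. ((\<lambda>y. R' y v) has_derivative (\<lambda>h. R'' h v)) (at x)"
    and curl: "\<And>y. y \<in> S \<Longrightarrow> curl_mat R y = \<alpha>"
  shows "R' x = (\<lambda>h. 0)"
proof -
  define W where "W k = transpose (R x) ** R' x (axis k 1)" for k
  define H where "H j k = transpose (R x) ** R'' (axis j 1) (axis k 1)" for j k
  have R_Rt: "R x ** transpose (R x) = mat 1"
    using orth[OF assms(2)] by (simp add: orthogonal_matrix_def)
  have frame: "R' x v = R x ** (transpose (R x) ** R' x v)" for v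
    by (simp add: matrix_mul_assoc R_Rt)
  have "transpose (W k) = - W k" for k
    using orthogonal_field_derivative_skew[OF assms(1,2) orth dR[OF assms(2)], of "axis k 1"]
    by (simp add: W_def matrix_transpose_mul eq_neg_iff_add_eq_0)
  moreover have "H j k = H k j" for j k
    using second_derivative_symmetric[OF assms(1,2) dR dR' dR'] by (simp add: H_def)
  moreover have "H j k $ p $ l = H j l $ p $ k" for j k p l
    using curl_const_second_derivative_symmetric[OF assms(1,2) dR dR' curl]
    by (simp add: H_def matrix_matrix_mult_def)
  moreover have "transpose (W j) ** W k + transpose (W k) ** W j + H j k + transpose (H j k) = 0"
    for j k
    using orthogonal_field_second_derivative[OF assms(1,2) orth dR dR', of "axis j 1"]
    by (subst (asm) (1 2) frame)
      (simp add: W_def H_def matrix_transpose_mul matrix_mul_assoc)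
  ultimately have "W k = 0" for k
    by (rule skew_connection_eq_0)
  then have "R' x (axis k 1) = 0" for k
    using frame[of "axis k 1"] by (simp add: W_def)
  moreover have "linear (R' x)"
    using has_derivative_linear[OF dR[OF assms(2)]] .
  ultimately show ?thesis
    by (intro linear_eq_stdbasis) (auto simp: Basis_vec_def linear_zero)
qed

theorem theorem4p4:
  fixes \<Omega> :: "(real^3) set" and R :: "real^3 \<Rightarrow> real^3^3" and \<alpha> :: "real^3^3"
  assumes "open \<Omega>" and "connected \<Omega>"
    and "C2_on \<Omega> R"
    and "\<forall>x\<in>\<Omega>. rotation_matrix (R x)"
    and "\<forall>x\<in>\<Omega>. curl_mat R x = \<alpha>"
  shows "\<exists>C. \<forall>x\<in>\<Omega>. R x = C"
proof -
  obtain f' :: "real^3 \<Rightarrow> ((real^3) \<Rightarrow>\<^sub>L (real^3^3))"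
    and f'' :: "real^3 \<Rightarrow> ((real^3) \<Rightarrow>\<^sub>L ((real^3) \<Rightarrow>\<^sub>L (real^3^3)))"
    where dR: "\<And>y. y \<in> \<Omega> \<Longrightarrow> (R has_derivative blinfun_apply (f' y)) (at y)"
      and df': "\<And>y. y \<in> \<Omega> \<Longrightarrow> (f' has_derivative blinfun_apply (f'' y)) (at y)"
    using assms(3) unfolding C2_on_def by blast
  have "blinfun_apply (f' x) = (\<lambda>h. 0)" if "x \<in> \<Omega>" for x
  proof (rule orthogonal_field_const_curl_derivative_eq_0[OF assms(1) that _ dR])
    show "orthogonal_matrix (R y)" if "y \<in> \<Omega>" for y
      using assms(4) that by (simp add: rotation_matrix_def)
    show "((\<lambda>y. f' y v) has_derivative (\<lambda>h. f'' x h v)) (at x)" for v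
      by (auto intro!: derivative_eq_intros df' that)
    show "curl_mat R y = \<alpha>" if "y \<in> \<Omega>" for y
      using assms(5) that by blast
  qed
  then have "R x = R y" if "x \<in> \<Omega>" "y \<in> \<Omega>" for x y
    using has_derivative_zero_unique_connected[OF assms(1,2) _ that] dR by metis
  then show ?thesis
    by blast
qed

end
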